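(* Fix $\omega_1,\omega_2,\omega_3>0$ with $\omega_1\le\omega_2\le\omega_3$ and fix $E>0$. For each integer $N\ge 1$ set $\hbar:=N^{-1/3}$ and \[ n_1^{\max}:=\lfloor N^{1/3}E\rfloor,\qquad n_2^{\max}:=\Big\lfloor N^{1/3}E\,\tfrac{\omega_1}{\omega_2}\Big\rfloor,\qquad n_3^{\max}:=\Big\lfloor N^{1/3}E\,\tfrac{\omega_1}{\omega_3}\Big\rfloor . \] Define the orthogonal projection on $L^2(\mathbb{R}^3)$ \[ \omega_N:=\sum_{n_1=0}^{n_1^{\max}}\sum_{n_2=0}^{n_2^{\max}}\sum_{n_3=0}^{n_3^{\max}}\lvert n_1,n_2,n_3\rangle\langle n_1,n_2,n_3\rvert . \] Then there is a constant $C>0$, independent of $N$, such that for all $N\ge1$ and all $i\in\{1,2,3\}$ \[ \lVert [x_i,\omega_N]\rVert_{\mathrm{tr}}\le C N\hbar\qquad\text{and}\qquad \lVert [p_i,\omega_N]\rVert_{\mathrm{tr}}\le C N\hbar . \]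
   Context: $x_i$ denotes the position (multiplication) operator in the $i$-th coordinate on $L^2(\mathbb{R}^3)$ and $p_i:=-i\hbar\,\partial_{x_i}$ the momentum operator, with $\hbar=N^{-1/3}$. For each $i\in\{1,2,3\}$ define the annihilation and creation operators $a_i:=\sqrt{\omega_i/(2\hbar)}\,(x_i+\tfrac{i}{\omega_i}p_i)$ and $a_i^*:=\sqrt{\omega_i/(2\hbar)}\,(x_i-\tfrac{i}{\omega_i}p_i)$. For $n\in\mathbb{N}_0$ let $\lvert n\rangle_i$ be the normalized eigenfunctions (Hermite functions in the variable $x_i$, depending on $\hbar$ and $\omega_i$) with $a_i\lvert 0\rangle_i=0$ and $\lvert n\rangle_i=(n!)^{-1/2}(a_i^* )^n\lvert 0\rangle_i$, so that $a_i^*\lvert n\rangle_i=\sqrt{n+1}\lvert n+1\rangle_i$, $a_i\lvert n\rangle_i=\sqrt n\lvert n-1\rangle_i$. Then $\lvert n_1,n_2,n_3\rangle:=\lvert n_1\rangle_1\otimes\lvert n_2\rangle_2\otimes\lvert n_3\rangle_3\in L^2(\mathbb{R}^3)$; these are the eigenfunctions of the anisotropic harmonic oscillator $h=\sum_{i=1}^3(p_i^2+\omega_i^2x_i^2)=\hbar\sum_i2\omega_i(a_i^*a_i+\tfrac12)$, and $\omega_N$ is the one-particle reduced density matrix of the Slater determinant ground state of non-interacting fermions in this trap filled up to a common energy level. $\lVert\cdot\rVert_{\mathrm{tr}}$ is the trace norm. *)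

theory Defs
  imports "HOL-Analysis.Analysis"
begin

text \<open>
  We work in the orthonormal Hermite basis |n1,n2,n3> of L^2(R^3).  Via the unitary
  map sending |n1,n2,n3> to the n-th unit vector, operators on L^2(R^3) are represented
  by their matrices A m n = <m|A|n>, indexed by triples of natural numbers.
  The coordinate index i ranges over {1,2,3}.
\<close>

type_synonym idx = "nat \<times> nat \<times> nat"
type_synonym opmat = "idx \<Rightarrow> idx \<Rightarrow> complex"

definition coord :: "nat \<Rightarrow> idx \<Rightarrow> nat" where
  "coord i n = (case n of (a, b, c) \<Rightarrow> if i = 1 then a else if i = 2 then b else c)"

definition same_except :: "nat \<Rightarrow> idx \<Rightarrow> idx \<Rightarrow> bool" where
  "same_except i m n \<longleftrightarrow> (\<forall>j\<in>{1,2,3}. j \<noteq> i \<longrightarrow> coord j m = coord j n)"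

definition ann :: "nat \<Rightarrow> opmat" where
  "ann i m n = (if same_except i m n \<and> coord i m + 1 = coord i n
                then complex_of_real (sqrt (real (coord i n))) else 0)"

definition cre :: "nat \<Rightarrow> opmat" where
  "cre i m n = (if same_except i m n \<and> coord i m = coord i n + 1
                then complex_of_real (sqrt (real (coord i n) + 1)) else 0)"

text \<open>With c = sqrt(omega_i/(2 hbar)), a = c (x + i p/omega), a^* = c (x - i p/omega), hence
  x = (a + a^*)/(2c) and p = omega (a - a^*)/(2 i c).\<close>
definition cfac :: "real \<Rightarrow> (nat \<Rightarrow> real) \<Rightarrow> nat \<Rightarrow> real" where
  "cfac hb w i = sqrt (w i / (2 * hb))"

definition x_op :: "real \<Rightarrow> (nat \<Rightarrow> real) \<Rightarrow> nat \<Rightarrow> opmat" where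
  "x_op hb w i = (\<lambda>m n. (ann i m n + cre i m n) / (2 * complex_of_real (cfac hb w i)))"

definition p_op :: "real \<Rightarrow> (nat \<Rightarrow> real) \<Rightarrow> nat \<Rightarrow> opmat" where
  "p_op hb w i = (\<lambda>m n. complex_of_real (w i) * (ann i m n - cre i m n)
                          / (2 * \<i> * complex_of_real (cfac hb w i)))"

definition ketbra :: "idx \<Rightarrow> opmat" where
  "ketbra k = (\<lambda>m n. if m = k \<and> n = k then 1 else 0)"

definition mat_mult :: "opmat \<Rightarrow> opmat \<Rightarrow> opmat" where
  "mat_mult A B = (\<lambda>m n. infsum (\<lambda>k. A m k * B k n) UNIV)"

definition commutator :: "opmat \<Rightarrow> opmat \<Rightarrow> opmat" where
  "commutator A B = (\<lambda>m n. mat_mult A B m n - mat_mult B A m n)"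

definition adj :: "opmat \<Rightarrow> opmat" where
  "adj A = (\<lambda>m n. cnj (A n m))"

definition fin_supp :: "opmat \<Rightarrow> bool" where
  "fin_supp A \<longleftrightarrow> finite {(m, n). A m n \<noteq> 0}"

definition psd :: "opmat \<Rightarrow> bool" where
  "psd P \<longleftrightarrow> (\<forall>m n. P m n = cnj (P n m)) \<and>
     (\<forall>v :: idx \<Rightarrow> complex. finite {k. v k \<noteq> 0} \<longrightarrow>
        0 \<le> Re (\<Sum>m\<in>{k. v k \<noteq> 0}. \<Sum>n\<in>{k. v k \<noteq> 0}. cnj (v m) * P m n * v n))"

definition abs_op :: "opmat \<Rightarrow> opmat" where
  "abs_op A = (THE P. fin_supp P \<and> psd P \<and> mat_mult P P = mat_mult (adj A) A)"

definition trace_norm :: "opmat \<Rightarrow> real" where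
  "trace_norm A = Re (infsum (\<lambda>n. abs_op A n n) UNIV)"

definition hbar :: "nat \<Rightarrow> real" where
  "hbar N = real N powr (-1/3)"

definition nmax :: "(nat \<Rightarrow> real) \<Rightarrow> real \<Rightarrow> nat \<Rightarrow> nat \<Rightarrow> nat" where
  "nmax w E N j = nat \<lfloor>real N powr (1/3) * E * (w 1 / w j)\<rfloor>"

definition box :: "(nat \<Rightarrow> real) \<Rightarrow> real \<Rightarrow> nat \<Rightarrow> idx set" where
  "box w E N = {0..nmax w E N 1} \<times> {0..nmax w E N 2} \<times> {0..nmax w E N 3}"

definition omegaN :: "(nat \<Rightarrow> real) \<Rightarrow> real \<Rightarrow> nat \<Rightarrow> opmat" where
  "omegaN w E N = (\<lambda>m n. \<Sum>k\<in>box w E N. ketbra k m n)"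

end

theory Submission
  imports Defs
begin

(* In the Hermite basis x_i and p_i are nearest-neighbour operators: they only couple |n>
   to |n +- e_i>, with matrix entries of size O(sqrt (hbar (n_i + 1))).  The projection
   omega_N is the diagonal indicator of a cuboid of side length at most N^(1/3) E, so the
   commutator [X, omega_N] keeps exactly the entries of X on the edges crossing the boundary
   of the cuboid in direction i.  Every site lies on at most one such edge, so the commutator
   is a partial matching matrix: A^* A is diagonal and the trace norm of A is the sum of the
   moduli of its entries.  The crossing edges are injectively indexed by the O(N^(2/3)) sites
   of the two boundary layers, and each entry is O(1) because n_i <= N^(1/3) E + 1 there;
   hence the trace norm is O(N^(2/3)) = O(N hbar). *)

section \<open>Square roots and trace norms of finitely supported matrices\<close>


lemma infsum_UNIV_eq_sum:
  fixes f :: "'a \<Rightarrow> 'b::{comm_monoid_add, t2_space}"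
  assumes "finite F" and "\<And>x. x \<notin> F \<Longrightarrow> f x = 0"
  shows "infsum f UNIV = sum f F"
  using assms by (subst infsum_cong_neutral[where T = F and g = f]) auto

lemma mat_mult_eq_sum:
  assumes "finite R" and "\<And>l. l \<notin> R \<Longrightarrow> A m l * B l n = 0"
  shows "mat_mult A B m n = (\<Sum>l\<in>R. A m l * B l n)"
  unfolding mat_mult_def using assms by (rule infsum_UNIV_eq_sum)

lemma fin_supp_indices:
  assumes "fin_supp A"
  obtains R where "finite R" and "\<And>m n. A m n \<noteq> 0 \<Longrightarrow> m \<in> R \<and> n \<in> R"
proof -
  let ?S = "{(m, n). A m n \<noteq> 0}"
  have "finite (fst ` ?S \<union> snd ` ?S)"
    using assms unfolding fin_supp_def by blast
  moreover have "m \<in> fst ` ?S \<union> snd ` ?S \<and> n \<in> fst ` ?S \<union> snd ` ?S" if "A m n \<noteq> 0" for m n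
    using that by (auto intro: image_eqI[where x = "(m, n)"])
  ultimately show ?thesis using that by blast
qed

lemma cnj_mult_self: "cnj z * z = complex_of_real ((cmod z)\<^sup>2)"
  by (simp only: complex_norm_square mult.commute)

lemma psd_quadratic_form_nonneg:
  assumes "psd P" and "finite V" and "\<And>k. v k \<noteq> 0 \<Longrightarrow> k \<in> V"
  shows "0 \<le> Re (\<Sum>m\<in>V. \<Sum>n\<in>V. cnj (v m) * P m n * v n)"
proof -
  let ?S = "{k. v k \<noteq> 0}"
  have S: "?S \<subseteq> V"
    using assms(3) by blast
  have "0 \<le> Re (\<Sum>m\<in>?S. \<Sum>n\<in>?S. cnj (v m) * P m n * v n)"
    using assms(1) finite_subset[OF S assms(2)] unfolding psd_def by blast
  also have "(\<Sum>m\<in>?S. \<Sum>n\<in>?S. cnj (v m) * P m n * v n) = (\<Sum>m\<in>V. \<Sum>n\<in>V. cnj (v m) * P m n * v n)"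
  proof (rule sum.mono_neutral_cong_left[OF assms(2) S])
    show "\<forall>m\<in>V - ?S. (\<Sum>n\<in>V. cnj (v m) * P m n * v n) = 0"
      by simp
    show "(\<Sum>n\<in>?S. cnj (v m) * P m n * v n) = (\<Sum>n\<in>V. cnj (v m) * P m n * v n)" for m
      by (rule sum.mono_neutral_left[OF assms(2) S]) simp
  qed
  finally show ?thesis .
qed

lemma psd_negative_eigenvector_eq_0:
  assumes "psd P" and "s > 0" and "finite V" and supp: "\<And>k. v k \<noteq> 0 \<Longrightarrow> k \<in> V"
    and eigen: "\<And>m. m \<in> V \<Longrightarrow> (\<Sum>n\<in>V. P m n * v n) = - of_real s * v m"
  shows "v k = 0"
proof -
  have "0 \<le> Re (\<Sum>m\<in>V. \<Sum>n\<in>V. cnj (v m) * P m n * v n)"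
    by (rule psd_quadratic_form_nonneg[OF assms(1,3) supp])
  also have "(\<Sum>m\<in>V. \<Sum>n\<in>V. cnj (v m) * P m n * v n) = (\<Sum>m\<in>V. cnj (v m) * (\<Sum>n\<in>V. P m n * v n))"
    by (simp add: sum_distrib_left mult.assoc)
  also have "\<dots> = (\<Sum>m\<in>V. - of_real (s * (cmod (v m))\<^sup>2))"
  proof (intro sum.cong refl)
    fix m assume "m \<in> V"
    then have "cnj (v m) * (\<Sum>n\<in>V. P m n * v n) = - of_real s * (cnj (v m) * v m)"
      by (simp only: eigen) (simp add: algebra_simps)
    then show "cnj (v m) * (\<Sum>n\<in>V. P m n * v n) = - of_real (s * (cmod (v m))\<^sup>2)"
      by (simp add: cnj_mult_self)
  qed
  also have "Re \<dots> = - s * (\<Sum>m\<in>V. (cmod (v m))\<^sup>2)"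
    by (simp add: sum_distrib_left sum_negf)
  finally have "0 \<le> - s * (\<Sum>m\<in>V. (cmod (v m))\<^sup>2)" .
  then have "(\<Sum>m\<in>V. (cmod (v m))\<^sup>2) = 0"
    using \<open>s > 0\<close> by (simp add: antisym mult_le_0_iff sum_nonneg)
  then have "\<forall>m\<in>V. v m = 0"
    using assms(3) by (simp add: sum_nonneg_eq_0_iff)
  then show ?thesis
    using supp by blast
qed

lemma hermitian_column_eq_0:
  assumes herm: "\<And>m n. P m n = cnj (P n m)" and "finite R"
    and R: "\<And>m n. P m n \<noteq> 0 \<Longrightarrow> m \<in> R \<and> n \<in> R"
    and diag: "(\<Sum>l\<in>R. P k l * P l k) = 0"
  shows "P m k = 0"
proof -
  have "P k l * P l k = of_real ((cmod (P l k))\<^sup>2)" for l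
    by (subst herm[of k l]) (rule cnj_mult_self)
  then have "of_real (\<Sum>l\<in>R. (cmod (P l k))\<^sup>2) = (0 :: complex)"
    using diag by (simp only: of_real_sum)
  then have "(\<Sum>l\<in>R. (cmod (P l k))\<^sup>2) = 0"
    by (simp only: of_real_eq_0_iff)
  then have "\<forall>l\<in>R. P l k = 0"
    using \<open>finite R\<close> by (simp add: sum_nonneg_eq_0_iff)
  then show ?thesis
    using R[of m k] by auto
qed

definition diagm :: "(idx \<Rightarrow> real) \<Rightarrow> opmat" where
  "diagm d = (\<lambda>m n. if m = n then complex_of_real (d m) else 0)"

lemma mat_mult_diagm: "mat_mult (diagm d) (diagm e) = diagm (\<lambda>m. d m * e m)"
proof (intro ext)
  fix m n
  show "mat_mult (diagm d) (diagm e) m n = diagm (\<lambda>m. d m * e m) m n"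
    by (subst mat_mult_eq_sum[where R = "{m}"]) (auto simp: diagm_def)
qed

lemma fin_supp_diagm:
  assumes "finite F" and "\<And>m. m \<notin> F \<Longrightarrow> d m = 0"
  shows "fin_supp (diagm d)"
proof -
  have "{(m, n). diagm d m n \<noteq> 0} \<subseteq> (\<lambda>m. (m, m)) ` F"
    using assms(2) by (auto simp: diagm_def split: if_splits)
  then show ?thesis
    unfolding fin_supp_def using assms(1) finite_surj by blast
qed

lemma psd_diagm:
  assumes "\<And>m. d m \<ge> 0"
  shows "psd (diagm d)"
  unfolding psd_def
proof (intro conjI allI impI)
  show "diagm d m n = cnj (diagm d n m)" for m n
    by (simp add: diagm_def)
  fix v :: "idx \<Rightarrow> complex"
  let ?S = "{k. v k \<noteq> 0}"
  assume "finite ?S"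
  have "(\<Sum>m\<in>?S. \<Sum>n\<in>?S. cnj (v m) * diagm d m n * v n) = (\<Sum>m\<in>?S. of_real (d m * (cmod (v m))\<^sup>2))"
  proof (intro sum.cong refl)
    fix m assume "m \<in> ?S"
    have "(\<Sum>n\<in>?S. cnj (v m) * diagm d m n * v n) = (\<Sum>n\<in>?S. if m = n then of_real (d m) * (cnj (v m) * v m) else 0)"
      by (intro sum.cong refl) (simp add: diagm_def)
    also have "\<dots> = of_real (d m * (cmod (v m))\<^sup>2)"
      using \<open>finite ?S\<close> \<open>m \<in> ?S\<close> by (simp add: sum.delta' cnj_mult_self)
    finally show "(\<Sum>n\<in>?S. cnj (v m) * diagm d m n * v n) = of_real (d m * (cmod (v m))\<^sup>2)" .
  qed
  also have "Re \<dots> = (\<Sum>m\<in>?S. d m * (cmod (v m))\<^sup>2)"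
    by (simp flip: of_real_sum)
  also have "\<dots> \<ge> 0"
    using assms by (intro sum_nonneg) simp
  finally show "0 \<le> Re (\<Sum>m\<in>?S. \<Sum>n\<in>?S. cnj (v m) * diagm d m n * v n)" .
qed

lemma commutator_diagm: "commutator X (diagm d) m n = X m n * of_real (d n - d m)"
proof -
  have "mat_mult X (diagm d) m n = X m n * of_real (d n)"
    by (subst mat_mult_eq_sum[where R = "{n}"]) (auto simp: diagm_def)
  moreover have "mat_mult (diagm d) X m n = of_real (d m) * X m n"
    by (subst mat_mult_eq_sum[where R = "{m}"]) (auto simp: diagm_def)
  ultimately show ?thesis
    by (simp add: commutator_def algebra_simps)
qed

lemma psd_sqrt_diagm_column:
  assumes "psd P" and "finite R" and R: "\<And>m n. P m n \<noteq> 0 \<Longrightarrow> m \<in> R \<and> n \<in> R"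
    and square: "\<And>m n. (\<Sum>l\<in>R. P m l * P l n) = diagm d m n" and "d k > 0"
  shows "P m k = diagm (\<lambda>m. sqrt (d m)) m k"
proof -
  define s where "s = sqrt (d k)"
  have "s > 0" and "s * s = d k"
    using \<open>d k > 0\<close> by (simp_all add: s_def)
  txt \<open>\<open>P e\<^sub>k - s e\<^sub>k\<close> is an eigenvector of \<open>P\<close> for the eigenvalue \<open>-s\<close>, hence zero.\<close>
  define u where "u l = P l k - (if l = k then of_real s else 0)" for l
  let ?V = "insert k R"
  have eigen: "(\<Sum>n\<in>?V. P m n * u n) = - of_real s * u m" for m
  proof -
    have "(\<Sum>n\<in>?V. P m n * P n k) = (\<Sum>n\<in>R. P m n * P n k)"
      using R \<open>finite R\<close> by (intro sum.mono_neutral_right) auto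
    then have "(\<Sum>n\<in>?V. P m n * u n) = diagm d m k - P m k * of_real s"
      using \<open>finite R\<close> square[of m k]
      by (simp add: u_def right_diff_distrib sum_subtractf if_distrib[of "\<lambda>x. P m _ * x"] cong: if_cong)
    then show ?thesis
      by (simp add: u_def diagm_def algebra_simps flip: \<open>s * s = d k\<close>)
  qed
  have "u m = 0"
    by (rule psd_negative_eigenvector_eq_0[OF assms(1) \<open>s > 0\<close> _ _ eigen])
      (use R \<open>finite R\<close> in \<open>auto simp: u_def split: if_splits\<close>)
  then show ?thesis
    by (simp add: u_def diagm_def s_def split: if_splits)
qed

lemma psd_sqrt_diagm_unique:
  assumes "fin_supp P" and "psd P" and "mat_mult P P = diagm d" and "\<And>m. d m \<ge> 0"
  shows "P = diagm (\<lambda>m. sqrt (d m))"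
proof (intro ext)
  fix m k
  obtain R where R: "finite R" "\<And>m n. P m n \<noteq> 0 \<Longrightarrow> m \<in> R \<and> n \<in> R"
    using fin_supp_indices[OF assms(1)] by blast
  have square: "(\<Sum>l\<in>R. P m l * P l n) = diagm d m n" for m n
  proof -
    have "mat_mult P P m n = (\<Sum>l\<in>R. P m l * P l n)"
      by (rule mat_mult_eq_sum[OF R(1)]) (metis R(2) mult_zero_left)
    then show ?thesis
      using assms(3) by simp
  qed
  show "P m k = diagm (\<lambda>m. sqrt (d m)) m k"
  proof (cases "d k = 0")
    case True
    have herm: "P m n = cnj (P n m)" for m n
      using assms(2) unfolding psd_def by blast
    have "(\<Sum>l\<in>R. P k l * P l k) = 0"
      using square[of k k] True by (simp add: diagm_def)
    with herm R have "P m k = 0"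
      by (rule hermitian_column_eq_0)
    with True show ?thesis
      by (simp add: diagm_def)
  next
    case False
    then show ?thesis
      using psd_sqrt_diagm_column[OF assms(2) R square] assms(4)[of k] by simp
  qed
qed

lemma abs_op_eq_diagm:
  assumes "mat_mult (adj A) A = diagm d" and "\<And>m. d m \<ge> 0"
    and "finite F" and "\<And>m. m \<notin> F \<Longrightarrow> d m = 0"
  shows "abs_op A = diagm (\<lambda>m. sqrt (d m))"
  unfolding abs_op_def
proof (rule the_equality)
  show "fin_supp (diagm (\<lambda>m. sqrt (d m))) \<and> psd (diagm (\<lambda>m. sqrt (d m))) \<and>
      mat_mult (diagm (\<lambda>m. sqrt (d m))) (diagm (\<lambda>m. sqrt (d m))) = mat_mult (adj A) A"
    using assms by (simp add: fin_supp_diagm psd_diagm mat_mult_diagm)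
  show "P = diagm (\<lambda>m. sqrt (d m))" if "fin_supp P \<and> psd P \<and> mat_mult P P = mat_mult (adj A) A" for P
    using that assms(1,2) by (intro psd_sqrt_diagm_unique) auto
qed

lemma trace_norm_eq_sum_sqrt:
  assumes "mat_mult (adj A) A = diagm d" and "\<And>m. d m \<ge> 0"
    and "finite F" and "\<And>m. m \<notin> F \<Longrightarrow> d m = 0"
  shows "trace_norm A = (\<Sum>m\<in>F. sqrt (d m))"
proof -
  have "infsum (\<lambda>n. abs_op A n n) UNIV = (\<Sum>n\<in>F. of_real (sqrt (d n)))"
    using assms(3,4) by (subst infsum_UNIV_eq_sum[OF assms(3)]) (auto simp: abs_op_eq_diagm[OF assms] diagm_def)
  then show ?thesis
    unfolding trace_norm_def by (simp flip: of_real_sum)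
qed

lemma sqrt_sum_squares_single:
  fixes f :: "'a \<Rightarrow> 'b::real_normed_vector"
  assumes "finite R" and single: "\<And>m m'. f m \<noteq> 0 \<Longrightarrow> f m' \<noteq> 0 \<Longrightarrow> m = m'"
  shows "sqrt (\<Sum>m\<in>R. (norm (f m))\<^sup>2) = (\<Sum>m\<in>R. norm (f m))"
proof (cases "\<exists>m\<in>R. f m \<noteq> 0")
  case True
  then obtain m0 where "m0 \<in> R" and "f m0 \<noteq> 0"
    by blast
  then have "(\<Sum>m\<in>R. g (f m)) = g (f m0)" if "g 0 = 0" for g :: "'b \<Rightarrow> real"
    using assms that by (subst sum.mono_neutral_right[where S = "{m0}"]) (auto, metis single)
  from this[of "\<lambda>z. (norm z)\<^sup>2"] this[of norm] show ?thesis
    by simp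
qed simp

lemma mat_mult_adj_self_rows_single:
  assumes "finite R" and R: "\<And>m n. A m n \<noteq> 0 \<Longrightarrow> m \<in> R"
    and row: "\<And>m n n'. A m n \<noteq> 0 \<Longrightarrow> A m n' \<noteq> 0 \<Longrightarrow> n = n'"
  shows "mat_mult (adj A) A = diagm (\<lambda>n. \<Sum>m\<in>R. (cmod (A m n))\<^sup>2)"
proof (intro ext)
  fix k l
  have "mat_mult (adj A) A k l = (\<Sum>m\<in>R. cnj (A m k) * A m l)"
    unfolding adj_def by (rule mat_mult_eq_sum[OF assms(1)]) (metis R mult_zero_right)
  also have "\<dots> = diagm (\<lambda>n. \<Sum>m\<in>R. (cmod (A m n))\<^sup>2) k l"
  proof (cases "k = l")
    case False
    then have "cnj (A m k) * A m l = 0" for m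
      using row[of m k l] by auto
    then have "(\<Sum>m\<in>R. cnj (A m k) * A m l) = 0"
      by (intro sum.neutral ballI)
    with False show ?thesis
      by (simp add: diagm_def)
  qed (simp add: diagm_def cnj_mult_self)
  finally show "mat_mult (adj A) A k l = diagm (\<lambda>n. \<Sum>m\<in>R. (cmod (A m n))\<^sup>2) k l" .
qed

lemma trace_norm_partial_matching:
  assumes "fin_supp A"
    and column: "\<And>m m' n. A m n \<noteq> 0 \<Longrightarrow> A m' n \<noteq> 0 \<Longrightarrow> m = m'"
    and row: "\<And>m n n'. A m n \<noteq> 0 \<Longrightarrow> A m n' \<noteq> 0 \<Longrightarrow> n = n'"
  shows "trace_norm A = (\<Sum>(m, n)\<in>{(m, n). A m n \<noteq> 0}. cmod (A m n))"
proof -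
  obtain R where R: "finite R" "\<And>m n. A m n \<noteq> 0 \<Longrightarrow> m \<in> R \<and> n \<in> R"
    using fin_supp_indices[OF assms(1)] by blast
  have "(\<Sum>m\<in>R. (cmod (A m n))\<^sup>2) = 0" if "n \<notin> R" for n
    using R(2) that by (metis (lifting) norm_zero power_zero_numeral sum.neutral)
  then have "trace_norm A = (\<Sum>n\<in>R. sqrt (\<Sum>m\<in>R. (cmod (A m n))\<^sup>2))"
    using R by (intro trace_norm_eq_sum_sqrt mat_mult_adj_self_rows_single row) (auto intro: sum_nonneg)
  also have "\<dots> = (\<Sum>n\<in>R. \<Sum>m\<in>R. cmod (A m n))"
    using R(1) column by (intro sum.cong refl sqrt_sum_squares_single) auto
  also have "\<dots> = (\<Sum>(m, n)\<in>R \<times> R. cmod (A m n))"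
    by (subst sum.swap) (simp add: sum.cartesian_product)
  also have "\<dots> = (\<Sum>(m, n)\<in>{(m, n). A m n \<noteq> 0}. cmod (A m n))"
    using R by (intro sum.mono_neutral_right) auto
  finally show ?thesis .
qed

lemma trace_norm_partial_matching_le:
  assumes "finite {(m, n). A m n \<noteq> 0}"
    and "\<And>m m' n. A m n \<noteq> 0 \<Longrightarrow> A m' n \<noteq> 0 \<Longrightarrow> m = m'"
    and "\<And>m n n'. A m n \<noteq> 0 \<Longrightarrow> A m n' \<noteq> 0 \<Longrightarrow> n = n'"
    and "\<And>m n. A m n \<noteq> 0 \<Longrightarrow> cmod (A m n) \<le> b"
  shows "trace_norm A \<le> real (card {(m, n). A m n \<noteq> 0}) * b"
proof -
  have "fin_supp A"
    using assms(1) unfolding fin_supp_def .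
  then have "trace_norm A = (\<Sum>(m, n)\<in>{(m, n). A m n \<noteq> 0}. cmod (A m n))"
    using assms(2,3) by (rule trace_norm_partial_matching)
  also have "\<dots> \<le> real (card {(m, n). A m n \<noteq> 0}) * b"
    using sum_bounded_above[of "{(m, n). A m n \<noteq> 0}" "\<lambda>(m, n). cmod (A m n)" b] assms(4) by auto
  finally show ?thesis .
qed

section \<open>Nearest-neighbour operators and the cuboid projection\<close>

(* simp rewrites the numeral 1 :: nat to Suc 0 *)
lemma coord_simps [simp]:
  "coord (Suc 0) (a, b, c) = a" "coord 2 (a, b, c) = b" "coord 3 (a, b, c) = c"
  by (simp_all add: coord_def)

lemma idx_eqI:
  assumes "\<And>j. j \<in> {1, 2, 3} \<Longrightarrow> coord j m = coord j n"
  shows "m = n"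
  using assms[of 1] assms[of 2] assms[of 3] by (cases m, cases n) simp

definition neighbours :: "nat \<Rightarrow> idx \<Rightarrow> idx \<Rightarrow> bool" where
  "neighbours i m n \<longleftrightarrow> same_except i m n \<and> (coord i m + 1 = coord i n \<or> coord i n + 1 = coord i m)"

lemma neighbours_sym: "neighbours i m n \<Longrightarrow> neighbours i n m"
  unfolding neighbours_def same_except_def by auto

lemma neighbours_same_except:
  "neighbours i m n \<Longrightarrow> neighbours i m' n \<Longrightarrow> same_except i m m'"
  unfolding neighbours_def same_except_def by auto

definition cuboid :: "(nat \<Rightarrow> nat) \<Rightarrow> idx set" where
  "cuboid M = {n. \<forall>j\<in>{1, 2, 3}. coord j n \<le> M j}"

(* The two layers n_i = M i and n_i = M i + 1 on either side of the face of the cuboid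
   orthogonal to e_i. *)
definition face :: "(nat \<Rightarrow> nat) \<Rightarrow> nat \<Rightarrow> idx set" where
  "face M i = {n \<in> cuboid (M(i := M i + 1)). M i \<le> coord i n}"

lemma cuboid_eq: "cuboid M = {0..M 1} \<times> {0..M 2} \<times> {0..M 3}"
  unfolding cuboid_def by (auto simp: coord_def)

lemma card_face_le:
  assumes "i \<in> {1, 2, 3}" and "\<And>j. j \<in> {1, 2, 3} \<Longrightarrow> M j \<le> L"
  shows "card (face M i) \<le> 2 * (L + 1)\<^sup>2"
proof -
  define layer where "layer j = (if j = i then {M i, M i + 1} else {0..L})" for j
  have "face M i \<subseteq> layer 1 \<times> layer 2 \<times> layer 3"
  proof
    fix n assume "n \<in> face M i"
    then have "coord j n \<in> layer j" if "j \<in> {1, 2, 3}" for j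
      using that assms(2)[OF that] unfolding face_def cuboid_def layer_def
      by (cases "j = i") force+
    from this[of 1] this[of 2] this[of 3] show "n \<in> layer 1 \<times> layer 2 \<times> layer 3"
      by (cases n) simp
  qed
  moreover have "card (layer 1 \<times> layer 2 \<times> layer 3) = 2 * (L + 1)\<^sup>2"
    using assms(1) by (auto simp: layer_def card_cartesian_product power2_eq_square)
  ultimately show ?thesis
    by (metis card_mono finite_cartesian_product finite_atLeastAtMost finite.insertI finite.emptyI layer_def)
qed

lemma neighbours_across_cuboid:
  assumes i: "i \<in> {1, 2, 3}" and "neighbours i m n" and "m \<in> cuboid M \<longleftrightarrow> n \<notin> cuboid M"
  shows "n \<in> face M i" and "coord i m + coord i n = 2 * M i + 1"
proof -
  have other: "coord j m = coord j n" if "j \<in> {1, 2, 3}" "j \<noteq> i" for j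
    using assms(2) that unfolding neighbours_def same_except_def by blast
  have mem: "x \<in> cuboid M \<longleftrightarrow> (\<forall>j\<in>{1, 2, 3} - {i}. coord j x \<le> M j) \<and> coord i x \<le> M i" for x
    using i unfolding cuboid_def by auto
  have "(\<forall>j\<in>{1, 2, 3} - {i}. coord j m \<le> M j) \<longleftrightarrow> (\<forall>j\<in>{1, 2, 3} - {i}. coord j n \<le> M j)"
    using other by auto
  then have others: "\<forall>j\<in>{1, 2, 3} - {i}. coord j n \<le> M j"
    and "coord i m \<le> M i \<longleftrightarrow> \<not> coord i n \<le> M i"
    using assms(3) unfolding mem by auto
  with assms(2) have "M i \<le> coord i n" "coord i n \<le> M i + 1"
    and "coord i m + coord i n = 2 * M i + 1"
    unfolding neighbours_def by auto
  moreover have "coord j n \<le> (M(i := M i + 1)) j" if "j \<in> {1, 2, 3}" for j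
    using that others calculation by (cases "j = i") auto
  ultimately show "n \<in> face M i"
    unfolding face_def cuboid_def by blast
  show "coord i m + coord i n = 2 * M i + 1"
    by fact
qed

lemma same_except_coord_eq:
  assumes "i \<in> {1, 2, 3}" and "same_except i m n" and "coord i m = coord i n"
  shows "m = n"
  using assms unfolding same_except_def by (intro idx_eqI) metis

lemma neighbours_across_cuboid_unique:
  assumes i: "i \<in> {1, 2, 3}" and "neighbours i m n" and "neighbours i m' n"
    and "m \<in> cuboid M \<longleftrightarrow> n \<notin> cuboid M" and "m' \<in> cuboid M \<longleftrightarrow> n \<notin> cuboid M"
  shows "m = m'"
  using neighbours_across_cuboid(2)[OF i assms(2,4)] neighbours_across_cuboid(2)[OF i assms(3,5)]
  by (intro same_except_coord_eq[OF i] neighbours_same_except[OF assms(2,3)]) simp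

lemma commutator_cuboid_crossing:
  assumes hop: "\<And>m n. X m n \<noteq> 0 \<Longrightarrow> neighbours i m n"
    and "commutator X (diagm (indicator (cuboid M))) m n \<noteq> 0"
  shows "neighbours i m n" and "m \<in> cuboid M \<longleftrightarrow> n \<notin> cuboid M"
  using assms by (auto simp: commutator_diagm indicator_def split: if_splits)

lemma commutator_cuboid_support:
  assumes i: "i \<in> {1, 2, 3}" and hop: "\<And>m n. X m n \<noteq> 0 \<Longrightarrow> neighbours i m n"
    and "commutator X (diagm (indicator (cuboid M))) m n \<noteq> 0"
  shows "(m, n) \<in> face M i \<times> face M i"
  using neighbours_across_cuboid(1)[OF i commutator_cuboid_crossing[OF hop assms(3)]]
    neighbours_across_cuboid(1)[OF i neighbours_sym[OF commutator_cuboid_crossing(1)[OF hop assms(3)]]]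
    commutator_cuboid_crossing(2)[OF hop assms(3)]
  by auto

lemma commutator_cuboid_column_unique:
  assumes i: "i \<in> {1, 2, 3}" and hop: "\<And>m n. X m n \<noteq> 0 \<Longrightarrow> neighbours i m n"
    and "commutator X (diagm (indicator (cuboid M))) m n \<noteq> 0"
    and "commutator X (diagm (indicator (cuboid M))) m' n \<noteq> 0"
  shows "m = m'"
  using neighbours_across_cuboid_unique[OF i commutator_cuboid_crossing(1)[OF hop assms(3)]
      commutator_cuboid_crossing(1)[OF hop assms(4)]]
    commutator_cuboid_crossing(2)[OF hop assms(3)] commutator_cuboid_crossing(2)[OF hop assms(4)]
  by blast

lemma commutator_cuboid_row_unique:
  assumes i: "i \<in> {1, 2, 3}" and hop: "\<And>m n. X m n \<noteq> 0 \<Longrightarrow> neighbours i m n"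
    and "commutator X (diagm (indicator (cuboid M))) m n \<noteq> 0"
    and "commutator X (diagm (indicator (cuboid M))) m n' \<noteq> 0"
  shows "n = n'"
  using neighbours_across_cuboid_unique[OF i
      neighbours_sym[OF commutator_cuboid_crossing(1)[OF hop assms(3)]]
      neighbours_sym[OF commutator_cuboid_crossing(1)[OF hop assms(4)]]]
    commutator_cuboid_crossing(2)[OF hop assms(3)] commutator_cuboid_crossing(2)[OF hop assms(4)]
  by blast

lemma norm_commutator_cuboid_le:
  assumes i: "i \<in> {1, 2, 3}" and entry: "\<And>m n. (cmod (X m n))\<^sup>2 \<le> K * (real (coord i n) + 1)"
    and "M i \<le> L" and "n \<in> face M i"
  shows "cmod (commutator X (diagm (indicator (cuboid M))) m n) \<le> sqrt (K * (real L + 2))"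
proof -
  have "K \<ge> 0"
    using order_trans[OF zero_le_power2 entry] by (simp add: zero_le_mult_iff)
  have "coord i n \<le> M i + 1"
    using \<open>n \<in> face M i\<close> i unfolding face_def cuboid_def by auto
  then have "K * (real (coord i n) + 1) \<le> K * (real L + 2)"
    using \<open>M i \<le> L\<close> \<open>K \<ge> 0\<close> by (intro mult_left_mono) auto
  then have "(cmod (X m n))\<^sup>2 \<le> K * (real L + 2)"
    using entry[of m n] by linarith
  moreover have "cmod (commutator X (diagm (indicator (cuboid M))) m n) \<le> cmod (X m n)"
    by (auto simp: commutator_diagm indicator_def norm_mult)
  ultimately show ?thesis
    by (metis norm_ge_zero order_trans real_le_rsqrt)
qed

lemma card_le_card_snd:
  assumes "finite B" and "S \<subseteq> A \<times> B" and "\<And>m m' n. (m, n) \<in> S \<Longrightarrow> (m', n) \<in> S \<Longrightarrow> m = m'"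
  shows "card S \<le> card B"
proof (rule card_inj_on_le[OF _ _ assms(1)])
  show "snd ` S \<subseteq> B"
    using assms(2) by auto
  show "inj_on snd S"
  proof (rule inj_onI)
    fix p q assume "p \<in> S" and "q \<in> S" and "snd p = snd q"
    moreover obtain m n m' n' where "p = (m, n)" and "q = (m', n')"
      by (cases p, cases q)
    ultimately show "p = q"
      using assms(3)[of m n m'] by simp
  qed
qed

lemma trace_norm_commutator_cuboid:
  assumes i: "i \<in> {1, 2, 3}"
    and hop: "\<And>m n. X m n \<noteq> 0 \<Longrightarrow> neighbours i m n"
    and entry: "\<And>m n. (cmod (X m n))\<^sup>2 \<le> K * (real (coord i n) + 1)"
    and L: "\<And>j. j \<in> {1, 2, 3} \<Longrightarrow> M j \<le> L"
  shows "trace_norm (commutator X (diagm (indicator (cuboid M))))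
           \<le> 2 * (real L + 1)\<^sup>2 * sqrt (K * (real L + 2))"
proof -
  define A where "A = commutator X (diagm (indicator (cuboid M)))"
  define S where "S = {(m, n). A m n \<noteq> 0}"
  have "finite (face M i)"
    unfolding face_def cuboid_eq by simp
  have S: "S \<subseteq> face M i \<times> face M i"
    unfolding S_def A_def using commutator_cuboid_support[OF i hop] by blast
  have "card S \<le> card (face M i)"
    using commutator_cuboid_column_unique[OF i hop]
    by (intro card_le_card_snd[OF \<open>finite (face M i)\<close> S]) (auto simp: S_def A_def)
  also have "\<dots> \<le> 2 * (L + 1)\<^sup>2"
    by (rule card_face_le[OF i L])
  finally have card: "real (card S) \<le> 2 * (real L + 1)\<^sup>2"
    using of_nat_mono[of "card S" "2 * (L + 1)\<^sup>2"] by (simp add: add.commute)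
  have "K \<ge> 0"
    using order_trans[OF zero_le_power2 entry] by (simp add: zero_le_mult_iff)
  have "trace_norm A \<le> real (card S) * sqrt (K * (real L + 2))"
    unfolding S_def A_def
  proof (rule trace_norm_partial_matching_le)
    show "finite {(m, n). commutator X (diagm (indicator (cuboid M))) m n \<noteq> 0}"
      using finite_subset[OF S] \<open>finite (face M i)\<close> unfolding S_def A_def by blast
  qed (use commutator_cuboid_column_unique[OF i hop] commutator_cuboid_row_unique[OF i hop]
      commutator_cuboid_support[OF i hop]
      norm_commutator_cuboid_le[where X = X and K = K and M = M, OF i entry L[OF i]] in blast)+
  also have "\<dots> \<le> 2 * (real L + 1)\<^sup>2 * sqrt (K * (real L + 2))"
    using card \<open>K \<ge> 0\<close> by (intro mult_right_mono) auto
  finally show ?thesis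
    unfolding A_def .
qed

section \<open>The harmonic oscillator\<close>

lemma x_op_neighbours: "x_op hb w i m n \<noteq> 0 \<Longrightarrow> neighbours i m n"
  by (auto simp: x_op_def ann_def cre_def neighbours_def split: if_splits)

lemma p_op_neighbours: "p_op hb w i m n \<noteq> 0 \<Longrightarrow> neighbours i m n"
  by (auto simp: p_op_def ann_def cre_def neighbours_def split: if_splits)

lemma ann_cre_entry_bound:
  "(cmod (ann i m n + cre i m n))\<^sup>2 \<le> real (coord i n) + 1"
  "(cmod (ann i m n - cre i m n))\<^sup>2 \<le> real (coord i n) + 1"
  by (auto simp: ann_def cre_def)

lemma x_op_entry_bound:
  assumes "hb > 0" and "w i > 0"
  shows "(cmod (x_op hb w i m n))\<^sup>2 \<le> hb / (2 * w i) * (real (coord i n) + 1)"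
proof -
  have c: "(2 * cfac hb w i)\<^sup>2 = 2 * w i / hb" "cfac hb w i > 0"
    using assms by (simp_all add: cfac_def power_mult_distrib)
  have "(cmod (x_op hb w i m n))\<^sup>2 = (cmod (ann i m n + cre i m n))\<^sup>2 / (2 * cfac hb w i)\<^sup>2"
    using c by (simp add: x_op_def norm_divide power_divide)
  also have "\<dots> \<le> (real (coord i n) + 1) / (2 * w i / hb)"
    unfolding c(1) using assms by (intro divide_right_mono ann_cre_entry_bound) simp
  finally show ?thesis
    by (simp add: mult.commute)
qed

lemma p_op_entry_bound:
  assumes "hb > 0" and "w i > 0"
  shows "(cmod (p_op hb w i m n))\<^sup>2 \<le> hb * w i / 2 * (real (coord i n) + 1)"
proof -
  have c: "(2 * cfac hb w i)\<^sup>2 = 2 * w i / hb" "cfac hb w i > 0"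
    using assms by (simp_all add: cfac_def power_mult_distrib)
  have "(cmod (p_op hb w i m n))\<^sup>2 = (w i)\<^sup>2 * (cmod (ann i m n - cre i m n))\<^sup>2 / (2 * cfac hb w i)\<^sup>2"
    using c assms by (simp add: p_op_def norm_divide norm_mult power_divide power_mult_distrib)
  also have "\<dots> \<le> (w i)\<^sup>2 * (real (coord i n) + 1) / (2 * w i / hb)"
    unfolding c(1) using assms by (intro divide_right_mono mult_left_mono ann_cre_entry_bound) simp_all
  also have "\<dots> = hb * w i / 2 * (real (coord i n) + 1)"
    using assms by (simp add: field_simps power2_eq_square)
  finally show ?thesis .
qed

lemma hbar_eq:
  assumes "N \<ge> 1"
  shows "hbar N = 1 / real N powr (1/3)" and "real N * hbar N = (real N powr (1/3))\<^sup>2"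
proof -
  define t where "t = real N powr (1/3)"
  have hbar: "hbar N = 1 / t"
    unfolding hbar_def t_def by (simp add: powr_minus_divide)
  have "real N = t ^ 3"
    unfolding t_def using assms by (subst powr_power) auto
  then have "real N * hbar N = t\<^sup>2"
    using assms by (simp add: hbar power2_eq_square power3_eq_cube)
  with hbar show "hbar N = 1 / real N powr (1/3)" and "real N * hbar N = (real N powr (1/3))\<^sup>2"
    unfolding t_def by simp_all
qed

lemma nmax_le:
  assumes "w 1 > 0" and "w 1 \<le> w 2" and "w 2 \<le> w 3" and "E > 0" and "j \<in> {1, 2, 3}"
  shows "nmax w E N j \<le> nat \<lfloor>real N powr (1/3) * E\<rfloor>"
proof -
  have "w 1 / w j \<le> 1"
    using assms by auto
  then have "real N powr (1/3) * E * (w 1 / w j) \<le> real N powr (1/3) * E"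
    using \<open>E > 0\<close> by (intro mult_left_le) auto
  then show ?thesis
    unfolding nmax_def by (intro nat_mono floor_mono)
qed

lemma omegaN_eq_diagm: "omegaN w E N = diagm (indicator (cuboid (nmax w E N)))"
proof (intro ext)
  fix m n
  have "finite (box w E N)"
    by (simp add: box_def)
  then show "omegaN w E N m n = diagm (indicator (cuboid (nmax w E N))) m n"
    by (cases "m = n") (auto simp: omegaN_def ketbra_def diagm_def box_def cuboid_eq intro!: sum.neutral)
qed

lemma trace_norm_commutator_omegaN:
  assumes "w 1 > 0" and "w 1 \<le> w 2" and "w 2 \<le> w 3"
    and "E > 0" and "N \<ge> 1" and i: "i \<in> {1, 2, 3}"
    and hop: "\<And>m n. X m n \<noteq> 0 \<Longrightarrow> neighbours i m n"
    and entry: "\<And>m n. (cmod (X m n))\<^sup>2 \<le> K * (real (coord i n) + 1)"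
    and K: "K \<le> c * hbar N"
  shows "trace_norm (commutator X (omegaN w E N))
           \<le> 2 * (E + 1)\<^sup>2 * sqrt (c * (E + 2)) * real N * hbar N"
proof -
  define t where "t = real N powr (1/3)"
  define L where "L = nat \<lfloor>t * E\<rfloor>"
  have "t \<ge> 1"
    unfolding t_def using \<open>N \<ge> 1\<close> by (intro ge_one_powr_ge_zero) auto
  have L: "real L \<le> t * E"
    unfolding L_def using \<open>t \<ge> 1\<close> \<open>E > 0\<close> by simp
  have "K \<ge> 0"
    using order_trans[OF zero_le_power2 entry] by (simp add: zero_le_mult_iff)
  have Kt: "K \<le> c / t"
    using K hbar_eq(1)[OF \<open>N \<ge> 1\<close>] by (simp add: t_def)
  then have "0 \<le> c / t"
    using \<open>K \<ge> 0\<close> by linarith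
  then have "c \<ge> 0"
    using \<open>t \<ge> 1\<close> by (auto simp: zero_le_divide_iff)
  have "(real L + 1)\<^sup>2 \<le> (t * (E + 1))\<^sup>2"
    using L \<open>t \<ge> 1\<close> by (intro power_mono) (auto simp: algebra_simps)
  moreover have "K * (real L + 2) \<le> c * (E + 2)"
  proof -
    have "K * (real L + 2) \<le> c / t * (t * E + 2)"
      using Kt L \<open>K \<ge> 0\<close> \<open>c \<ge> 0\<close> \<open>t \<ge> 1\<close> by (intro mult_mono) auto
    also have "\<dots> \<le> c * (E + 2)"
      using \<open>c \<ge> 0\<close> \<open>t \<ge> 1\<close> by (simp add: field_simps mult_left_mono)
    finally show ?thesis .
  qed
  ultimately have "2 * (real L + 1)\<^sup>2 * sqrt (K * (real L + 2)) \<le> 2 * (t * (E + 1))\<^sup>2 * sqrt (c * (E + 2))"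
    using \<open>K \<ge> 0\<close> by (intro mult_mono) (auto intro: real_sqrt_le_mono)
  moreover have "trace_norm (commutator X (omegaN w E N)) \<le> 2 * (real L + 1)\<^sup>2 * sqrt (K * (real L + 2))"
    unfolding omegaN_eq_diagm L_def t_def
    using trace_norm_commutator_cuboid[OF i hop entry nmax_le[OF assms(1-4)]] .
  ultimately have "trace_norm (commutator X (omegaN w E N)) \<le> 2 * (t * (E + 1))\<^sup>2 * sqrt (c * (E + 2))"
    by linarith
  also have "\<dots> = 2 * (E + 1)\<^sup>2 * sqrt (c * (E + 2)) * real N * hbar N"
    using hbar_eq(2)[OF \<open>N \<ge> 1\<close>] by (simp add: t_def power_mult_distrib)
  finally show ?thesis .
qed

lemma oscillator_scale_le:
  fixes w :: "nat \<Rightarrow> real"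
  assumes "w 1 > 0" and "w 1 \<le> w i" and "w i \<le> w 3" and "hb > 0"
  shows "hb / (2 * w i) \<le> (1 / (2 * w 1) + w 3 / 2) * hb"
    and "hb * w i / 2 \<le> (1 / (2 * w 1) + w 3 / 2) * hb"
proof -
  have "1 / (2 * w i) \<le> 1 / (2 * w 1) + w 3 / 2"
    using assms by (simp add: frac_le add_increasing2)
  from mult_right_mono[OF this, of hb] show "hb / (2 * w i) \<le> (1 / (2 * w 1) + w 3 / 2) * hb"
    using \<open>hb > 0\<close> by (simp add: algebra_simps)
  have "w i / 2 \<le> 1 / (2 * w 1) + w 3 / 2"
    using assms by (intro add_increasing) auto
  from mult_right_mono[OF this, of hb] show "hb * w i / 2 \<le> (1 / (2 * w 1) + w 3 / 2) * hb"
    using \<open>hb > 0\<close> by (simp add: algebra_simps)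
qed

theorem theorem3p2:
  fixes w :: "nat \<Rightarrow> real" and E :: real
  assumes "w 1 > 0" and "w 2 > 0" and "w 3 > 0"
    and "w 1 \<le> w 2" and "w 2 \<le> w 3" and "E > 0"
  shows "\<exists>C>0. \<forall>N::nat. N \<ge> 1 \<longrightarrow> (\<forall>i\<in>{1,2,3}.
           trace_norm (commutator (x_op (hbar N) w i) (omegaN w E N)) \<le> C * real N * hbar N \<and>
           trace_norm (commutator (p_op (hbar N) w i) (omegaN w E N)) \<le> C * real N * hbar N)"
proof (intro exI conjI allI impI ballI)
  define c where "c = 1 / (2 * w 1) + w 3 / 2"
  show "2 * (E + 1)\<^sup>2 * sqrt (c * (E + 2)) > 0"
    using assms(1,3,6) by (simp add: c_def add_pos_pos)
  fix N :: nat and i :: nat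
  assume "N \<ge> 1" and i: "i \<in> {1, 2, 3}"
  have "hbar N > 0"
    using \<open>N \<ge> 1\<close> by (simp add: hbar_def)
  have w: "w 1 \<le> w i" "w i \<le> w 3" "w i > 0"
    using i assms by auto
  note bound = trace_norm_commutator_omegaN[where c = c, OF assms(1,4,5,6) \<open>N \<ge> 1\<close> i]
  note scale = oscillator_scale_le[OF assms(1) w(1,2) \<open>hbar N > 0\<close>, folded c_def]
  show "trace_norm (commutator (x_op (hbar N) w i) (omegaN w E N))
          \<le> 2 * (E + 1)\<^sup>2 * sqrt (c * (E + 2)) * real N * hbar N"
    by (rule bound[OF x_op_neighbours x_op_entry_bound[where w = w, OF \<open>hbar N > 0\<close> w(3)] scale(1)])
  show "trace_norm (commutator (p_op (hbar N) w i) (omegaN w E N))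
          \<le> 2 * (E + 1)\<^sup>2 * sqrt (c * (E + 2)) * real N * hbar N"
    by (rule bound[OF p_op_neighbours p_op_entry_bound[where w = w, OF \<open>hbar N > 0\<close> w(3)] scale(2)])
qed

end
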